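(* Fix $N$, the graph $\mathcal G$, the vectors $C_1,\dots,C_N$, the attack bound $s$, and the noise bounds $b_w,b_v$. Then the following are equivalent: (i) there exists $\varepsilon>0$ such that for every $A\in\mathbb R^{n\times n}$ with $\|A\|\in[1,1+\varepsilon)$ there exist reals $\beta>0$, $\eta_0>0$ and an integer $L>\frac{\ln\|A\|}{\ln\gamma^{-1}}$ with $\eta_0(1-F(\eta_0))\ge q_0$ (where $F$ and $q_0$ are computed from these $A,\beta,L,\eta_0$); (ii) $\lambda_0>s$.
   Context: $C_i\in\mathbb R^{1\times n}$ with $\|C_i\|=1$, $i\in\mathcal V=\{1,\dots,N\}$; $\|\cdot\|$ is the Euclidean norm / induced 2-norm. $\mathcal G$ is an undirected connected graph on $\mathcal V$ without self-loops with Laplacian $\mathcal L$ (degree matrix minus adjacency matrix), whose second smallest and largest eigenvalues are $\lambda_2(\mathcal L),\lambda_{\max}(\mathcal L)$. $s$ is a nonnegative integer (upper bound on the number of attacked sensors), $b_w,b_v\ge0$. Notation: $\lambda_0=\min_{\mathcal J\subset\mathcal V,|\mathcal J|=N-s}\lambda_{\min}(\sum_{i\in\mathcal J}C_i^TC_i)$; $\gamma=\frac{\lambda_{\max}(\mathcal L)-\lambda_2(\mathcal L)}{\lambda_{\max}(\mathcal L)+\lambda_2(\mathcal L)}$; $p_0=\frac{\sqrt N\beta\gamma^L}{1-\|A\|\gamma^L}$; $k^*(\rho)=\min\{1,\frac{\beta}{\|A\|(p_0+\rho)+b_w+b_v}\}$; $F(\rho)=\|A\|(1-\frac{k^*(\rho)}{N}\lambda_0)$;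 $q_0=\frac{N-s}{N}(b_w+b_v+\|A\|p_0)+b_w+\frac{s\beta}{N}$. *)

theory Defs
  imports "HOL-Analysis.Analysis"
begin

text \<open>Real eigenvalues of a square real matrix (used only for symmetric matrices).\<close>
definition is_eig :: "real^'n^'n \<Rightarrow> real \<Rightarrow> bool" where
  "is_eig M \<mu> \<longleftrightarrow> (\<exists>v. v \<noteq> 0 \<and> M *v v = \<mu> *\<^sub>R v)"

definition min_eig :: "real^'n^'n \<Rightarrow> real" where
  "min_eig M = Min {\<mu>. is_eig M \<mu>}"

definition max_eig :: "real^'n^'n \<Rightarrow> real" where
  "max_eig M = Max {\<mu>. is_eig M \<mu>}"

definition eig_mult :: "real^'n^'n \<Rightarrow> real \<Rightarrow> nat" where
  "eig_mult M \<mu> = dim {v. M *v v = \<mu> *\<^sub>R v}"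

text \<open>Second smallest eigenvalue (counted with multiplicity) of a symmetric matrix.\<close>
definition second_eig :: "real^'n^'n \<Rightarrow> real" where
  "second_eig M = (if eig_mult M (min_eig M) \<ge> 2 then min_eig M
                   else Min ({\<mu>. is_eig M \<mu>} - {min_eig M}))"

definition laplacian :: "('v::finite \<Rightarrow> 'v \<Rightarrow> bool) \<Rightarrow> real^'v^'v" where
  "laplacian adj = (\<chi> i j. (if i = j then real (card {k. adj i k}) else 0)
                           - (if adj i j then 1 else 0))"

definition gamma :: "('v::finite \<Rightarrow> 'v \<Rightarrow> bool) \<Rightarrow> real" where
  "gamma adj = (max_eig (laplacian adj) - second_eig (laplacian adj))
             / (max_eig (laplacian adj) + second_eig (laplacian adj))"

text \<open>C_i^T C_i for a row vector C_i.\<close>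
definition outer :: "real^'n \<Rightarrow> real^'n^'n" where
  "outer c = (\<chi> a b. c $ a * c $ b)"

definition lambda0 :: "('v::finite \<Rightarrow> real^'n) \<Rightarrow> nat \<Rightarrow> real" where
  "lambda0 C s = Min ((\<lambda>J. min_eig (\<Sum>i\<in>J. outer (C i)))
                       ` {J :: 'v set. card J = CARD('v) - s})"

definition opnorm :: "real^'n^'n \<Rightarrow> real" where
  "opnorm A = onorm (\<lambda>x. A *v x)"

text \<open>The quantities p_0, k^*, F, q_0 (nA stands for the induced norm of A, N for the number of nodes).\<close>
definition p0 :: "nat \<Rightarrow> real \<Rightarrow> real \<Rightarrow> real \<Rightarrow> nat \<Rightarrow> real" where
  "p0 N nA \<beta> \<gamma> L = sqrt (real N) * \<beta> * \<gamma> ^ L / (1 - nA * \<gamma> ^ L)"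

definition kstar :: "nat \<Rightarrow> real \<Rightarrow> real \<Rightarrow> real \<Rightarrow> nat \<Rightarrow> real \<Rightarrow> real \<Rightarrow> real \<Rightarrow> real" where
  "kstar N nA \<beta> \<gamma> L bw bv \<rho> = min 1 (\<beta> / (nA * (p0 N nA \<beta> \<gamma> L + \<rho>) + bw + bv))"

definition Ffun :: "nat \<Rightarrow> real \<Rightarrow> real \<Rightarrow> real \<Rightarrow> nat \<Rightarrow> real \<Rightarrow> real \<Rightarrow> real \<Rightarrow> real \<Rightarrow> real" where
  "Ffun N nA \<beta> \<gamma> L bw bv lam0 \<rho> = nA * (1 - kstar N nA \<beta> \<gamma> L bw bv \<rho> / real N * lam0)"

definition q0 :: "nat \<Rightarrow> nat \<Rightarrow> real \<Rightarrow> real \<Rightarrow> real \<Rightarrow> nat \<Rightarrow> real \<Rightarrow> real \<Rightarrow> real" where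
  "q0 N s nA \<beta> \<gamma> L bw bv = (real N - real s) / real N * (bw + bv + nA * p0 N nA \<beta> \<gamma> L)
                             + bw + real s * \<beta> / real N"

text \<open>The condition L > ln(nA) / ln(1/gamma); for gamma = 0, ln(1/gamma) = +infinity and the bound is 0.\<close>
definition L_ok :: "real \<Rightarrow> real \<Rightarrow> nat \<Rightarrow> bool" where
  "L_ok nA \<gamma> L = (if \<gamma> = 0 then real L > 0 else real L > ln nA / ln (1 / \<gamma>))"

end

theory Submission
  imports Defs
begin

(* If lambda0 <= s and a = ||A|| > 1, then kstar * a * eta <= beta, so
   eta (1 - F eta) = eta (1 - a) + kstar a eta lambda0 / N < s beta / N <= q0:
   condition (i) fails for A = a I.
   If lambda0 > s and 1 <= a < 1 + (lambda0 - s) / N, take beta to be the fixed point of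
   beta = a (p0 + eta) + bw + bv.  Then kstar = 1 and the inequality reduces to
   c eta >= 2 bw + bv + a p0 with c = a (lambda0 - s) / N - (a - 1) > 0; as p0 / beta -> 0
   for L -> infinity, it holds once L and eta are large.
   Both directions need 0 <= gamma < 1, i.e. 0 < lambda_2 <= lambda_max for the Laplacian:
   the largest Rayleigh quotient of the Laplacian is a positive eigenvalue, and on a connected
   graph the kernel consists of the constant vectors, so the eigenvalue 0 is simple. *)

lemma transpose_eq_imp_inner_commute:
  fixes M :: "real^'n^'n"
  assumes "transpose M = M"
  shows "(M *v x) \<bullet> y = x \<bullet> (M *v y)"
  by (metis assms dot_lmul_matrix vector_transpose_matrix)

lemma nonneg_quadratic_imp_linear_coeff_zero:
  fixes a K :: real
  assumes "\<forall>t. 2 * t * a \<le> t\<^sup>2 * K" and "0 \<le> a"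
  shows "a = 0"
proof (rule ccontr)
  assume "a \<noteq> 0"
  with assms(2) have "0 < a" by simp
  define t where "t = a / (\<bar>K\<bar> + 1)"
  have "0 < t" using \<open>0 < a\<close> by (simp add: t_def add_pos_nonneg)
  have "t * \<bar>K\<bar> < a" using \<open>0 < a\<close> by (simp add: t_def field_simps)
  moreover have "t * (2 * a) \<le> t * (t * K)"
    using assms(1)[rule_format, of t] by (simp add: power2_eq_square algebra_simps)
  then have "2 * a \<le> t * K" using \<open>0 < t\<close> by simp
  moreover have "t * K \<le> t * \<bar>K\<bar>" using \<open>0 < t\<close> by (simp add: mult_left_mono)
  ultimately show False using \<open>0 < a\<close> by linarith
qed

lemma selfadjoint_nonneg_form_eq_0_imp_eq_0:
  fixes f :: "'a::real_inner \<Rightarrow> 'a"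
  assumes "linear f" and adj: "\<And>x y. f x \<bullet> y = x \<bullet> f y"
    and nonneg: "\<And>x. 0 \<le> x \<bullet> f x" and "u \<bullet> f u = 0"
  shows "f u = 0"
proof -
  define v where "v = f u"
  have "2 * t * (v \<bullet> v) \<le> t\<^sup>2 * (v \<bullet> f v)" for t
  proof -
    have "f (u - t *\<^sub>R v) = v - t *\<^sub>R f v"
      using \<open>linear f\<close> by (simp add: v_def linear_diff linear_scale)
    then have "(u - t *\<^sub>R v) \<bullet> f (u - t *\<^sub>R v) = (u - t *\<^sub>R v) \<bullet> (v - t *\<^sub>R f v)"
      by (simp only:)
    also have "\<dots> = u \<bullet> v - t * (u \<bullet> f v) - t * (v \<bullet> v) + t\<^sup>2 * (v \<bullet> f v)"
      by (simp add: inner_diff_left inner_diff_right inner_commute power2_eq_square algebra_simps)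
    also have "u \<bullet> f v = v \<bullet> v" using adj[of u v] by (simp add: v_def inner_commute)
    also have "u \<bullet> v = 0" using \<open>u \<bullet> f u = 0\<close> by (simp add: v_def)
    finally have "(u - t *\<^sub>R v) \<bullet> f (u - t *\<^sub>R v) = t\<^sup>2 * (v \<bullet> f v) - 2 * t * (v \<bullet> v)"
      by simp
    then show ?thesis using nonneg[of "u - t *\<^sub>R v"] by simp
  qed
  then have "v \<bullet> v = 0" by (intro nonneg_quadratic_imp_linear_coeff_zero) auto
  then show ?thesis by (simp add: v_def)
qed

lemma symmetric_has_eig_ge_quadratic_form:
  fixes M :: "real^'n^'n"
  assumes "transpose M = M"
  shows "\<exists>\<mu>. is_eig M \<mu> \<and> (\<forall>x. norm x = 1 \<longrightarrow> x \<bullet> (M *v x) \<le> \<mu>)"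
proof -
  have "continuous_on (sphere 0 1) (\<lambda>x::real^'n. x \<bullet> (M *v x))"
    by (intro continuous_intros linear_continuous_on matrix_vector_mul_bounded_linear)
  moreover have "sphere (0::real^'n) 1 \<noteq> {}" using norm_axis_1[of undefined] by force
  ultimately obtain u where u: "norm u = 1" and max: "\<And>y. norm y = 1 \<Longrightarrow> y \<bullet> (M *v y) \<le> u \<bullet> (M *v u)"
    using continuous_attains_sup[OF compact_sphere] by (metis mem_sphere_0)
  define \<mu> where "\<mu> = u \<bullet> (M *v u)"
  define f where "f x = \<mu> *\<^sub>R x - M *v x" for x
  have rayleigh: "x \<bullet> (M *v x) \<le> \<mu> * (norm x)\<^sup>2" for x
  proof (cases "x = 0")
    case False
    have "(x /\<^sub>R norm x) \<bullet> (M *v (x /\<^sub>R norm x)) \<le> \<mu>"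
      using max[of "x /\<^sub>R norm x"] False by (simp add: \<mu>_def)
    moreover have "0 < norm x" using False by simp
    ultimately show ?thesis
      by (simp add: matrix_vector_mult_scaleR power2_eq_square field_simps)
  qed simp
  have "linear f" unfolding f_def by (intro linear_compose_sub linear_scaleR matrix_vector_mul_linear)
  moreover have "f x \<bullet> y = x \<bullet> f y" for x y
    using transpose_eq_imp_inner_commute[OF assms] by (simp add: f_def inner_diff_left inner_diff_right)
  moreover have "0 \<le> x \<bullet> f x" for x
    using rayleigh[of x] by (simp add: f_def inner_diff_right power2_norm_eq_inner)
  moreover have "u \<bullet> f u = 0"
    using u by (simp add: f_def \<mu>_def inner_diff_right power2_norm_eq_inner[symmetric])
  ultimately have "f u = 0" by (rule selfadjoint_nonneg_form_eq_0_imp_eq_0)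
  then have "is_eig M \<mu>" using u unfolding is_eig_def f_def by (metis norm_zero right_minus_eq zero_neq_one)
  then show ?thesis using max \<mu>_def by blast
qed

lemma symmetric_eig_finite:
  fixes M :: "real^'n^'n"
  assumes "transpose M = M"
  shows "finite {\<mu>. is_eig M \<mu>}"
proof -
  define E where "E = {\<mu>. is_eig M \<mu>}"
  define v where "v \<mu> = (SOME x. x \<noteq> 0 \<and> M *v x = \<mu> *\<^sub>R x)" for \<mu>
  have v: "v \<mu> \<noteq> 0" "M *v v \<mu> = \<mu> *\<^sub>R v \<mu>" if "\<mu> \<in> E" for \<mu>
    using someI_ex[of "\<lambda>x. x \<noteq> 0 \<and> M *v x = \<mu> *\<^sub>R x"] that
    unfolding v_def E_def is_eig_def by auto
  have "inj_on v E"
    by (rule inj_onI) (metis v scaleR_cancel_right)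
  have "orthogonal (v \<mu>) (v \<nu>)" if "\<mu> \<in> E" "\<nu> \<in> E" "\<mu> \<noteq> \<nu>" for \<mu> \<nu>
  proof -
    have "\<mu> * (v \<mu> \<bullet> v \<nu>) = (M *v v \<mu>) \<bullet> v \<nu>" using v that by simp
    also have "\<dots> = v \<mu> \<bullet> (M *v v \<nu>)" by (rule transpose_eq_imp_inner_commute[OF assms])
    also have "\<dots> = \<nu> * (v \<mu> \<bullet> v \<nu>)" using v that by simp
    finally show ?thesis using \<open>\<mu> \<noteq> \<nu>\<close> by (simp add: orthogonal_def)
  qed
  then have "pairwise orthogonal (v ` E)" by (auto simp: pairwise_def)
  moreover have "0 \<notin> v ` E" using v by auto
  ultimately have "independent (v ` E)" by (rule pairwise_orthogonal_independent)
  then have "finite (v ` E)" by (rule independent_bound[THEN conjunct1])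
  then show ?thesis using \<open>inj_on v E\<close> finite_imageD E_def by blast
qed

lemma transpose_laplacian:
  assumes "\<forall>i j. adj i j \<longleftrightarrow> adj j i"
  shows "transpose (laplacian adj) = laplacian adj"
  using assms by (simp add: vec_eq_iff transpose_def laplacian_def)

lemma laplacian_mult_vec_nth:
  "(laplacian adj *v x) $ i = (\<Sum>j\<in>UNIV. if adj i j then x $ i - x $ j else 0)"
proof -
  have "(laplacian adj *v x) $ i
      = real (card {j. adj i j}) * x $ i - (\<Sum>j\<in>UNIV. if adj i j then x $ j else 0)"
    by (simp add: laplacian_def matrix_vector_mult_def left_diff_distrib sum_subtractf
        if_distrib[of "\<lambda>c. c * _"] cong: if_cong)
  also have "\<dots> = (\<Sum>j\<in>UNIV. if adj i j then x $ i - x $ j else 0)"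
    by (simp add: sum.If_cases sum_subtractf Int_def)
  finally show ?thesis .
qed

lemma laplacian_quadratic_form:
  assumes "\<forall>i j. adj i j \<longleftrightarrow> adj j i"
  shows "2 * (x \<bullet> (laplacian adj *v x))
       = (\<Sum>i\<in>UNIV. \<Sum>j\<in>UNIV. if adj i j then (x $ i - x $ j)\<^sup>2 else 0)"
proof -
  define S where "S = (\<Sum>i\<in>UNIV. \<Sum>j\<in>UNIV. if adj i j then x $ i * (x $ i - x $ j) else 0)"
  have form: "x \<bullet> (laplacian adj *v x) = S"
    by (simp add: S_def inner_vec_def laplacian_mult_vec_nth sum_distrib_left if_distrib[of "\<lambda>c. _ * c"]
        cong: if_cong)
  have "S = (\<Sum>j\<in>UNIV. \<Sum>i\<in>UNIV. if adj i j then x $ i * (x $ i - x $ j) else 0)"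
    unfolding S_def by (rule sum.swap)
  also have "\<dots> = (\<Sum>i\<in>UNIV. \<Sum>j\<in>UNIV. if adj i j then x $ j * (x $ j - x $ i) else 0)"
    using assms by (intro sum.cong) auto
  finally have "2 * S = S + \<dots>" by simp
  also have "\<dots> = (\<Sum>i\<in>UNIV. \<Sum>j\<in>UNIV. if adj i j then (x $ i - x $ j)\<^sup>2 else 0)"
    unfolding S_def sum.distrib[symmetric] by (intro sum.cong) (auto simp: power2_eq_square algebra_simps)
  finally show ?thesis using form by simp
qed

lemma laplacian_form_nonneg:
  assumes "\<forall>i j. adj i j \<longleftrightarrow> adj j i"
  shows "0 \<le> x \<bullet> (laplacian adj *v x)"
proof -
  have "0 \<le> (\<Sum>i\<in>UNIV. \<Sum>j\<in>UNIV. if adj i j then (x $ i - x $ j)\<^sup>2 else (0::real))"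
    by (intro sum_nonneg) auto
  then show ?thesis using laplacian_quadratic_form[OF assms, of x] by linarith
qed

lemma laplacian_kernel_constant:
  assumes "\<forall>i j. adj i j \<longleftrightarrow> adj j i" and "\<forall>i j. adj\<^sup>*\<^sup>* i j"
    and "laplacian adj *v x = 0"
  shows "x $ i = x $ j"
proof -
  have "(\<Sum>i\<in>UNIV. \<Sum>j\<in>UNIV. if adj i j then (x $ i - x $ j)\<^sup>2 else 0) = (0::real)"
    using laplacian_quadratic_form[OF assms(1), of x] assms(3) by simp
  then have "\<forall>a b. (if adj a b then (x $ a - x $ b)\<^sup>2 else 0) = (0::real)"
    by (simp add: sum_nonneg_eq_0_iff sum_nonneg)
  then have edge: "x $ a = x $ b" if "adj a b" for a b
    using that by (metis power_eq_0_iff right_minus_eq)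
  from assms(2) have "adj\<^sup>*\<^sup>* i j" by blast
  then show ?thesis by induction (auto dest: edge)
qed

lemma laplacian_axis_form:
  assumes "\<forall>i. \<not> adj i i"
  shows "axis a 1 \<bullet> (laplacian adj *v axis a 1) = real (card {k. adj a k})"
proof -
  have "(\<Sum>j\<in>UNIV. if adj a j then axis a (1::real) $ a - axis a 1 $ j else 0)
      = (\<Sum>j\<in>UNIV. if adj a j then 1 else 0)"
    using assms by (intro sum.cong) (auto simp: axis_def)
  then show ?thesis by (simp add: inner_axis' laplacian_mult_vec_nth sum.If_cases Int_def)
qed

lemma laplacian_eig_nonneg:
  assumes "\<forall>i j. adj i j \<longleftrightarrow> adj j i" and "is_eig (laplacian adj) \<mu>"
  shows "0 \<le> \<mu>"
proof -
  obtain v where "v \<noteq> 0" and "laplacian adj *v v = \<mu> *\<^sub>R v"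
    using assms(2) unfolding is_eig_def by blast
  then have "\<mu> * (v \<bullet> v) = v \<bullet> (laplacian adj *v v)" by simp
  then have "0 \<le> \<mu> * (v \<bullet> v)" using laplacian_form_nonneg[OF assms(1)] by simp
  moreover have "0 < v \<bullet> v" using \<open>v \<noteq> 0\<close> by simp
  ultimately show ?thesis by (simp add: zero_le_mult_iff)
qed

lemma is_eig_laplacian_0:
  fixes adj :: "'v::finite \<Rightarrow> 'v \<Rightarrow> bool"
  shows "is_eig (laplacian adj) 0"
proof -
  define ones :: "real^'v" where "ones = (\<chi> i. 1)"
  have "laplacian adj *v ones = 0"
    by (simp add: vec_eq_iff laplacian_mult_vec_nth ones_def cong: if_cong)
  moreover have "ones \<noteq> 0" by (simp add: vec_eq_iff ones_def)
  ultimately show ?thesis unfolding is_eig_def by auto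
qed

lemma min_eig_laplacian:
  assumes "\<forall>i j. adj i j \<longleftrightarrow> adj j i"
  shows "min_eig (laplacian adj) = 0"
  unfolding min_eig_def
  using symmetric_eig_finite[OF transpose_laplacian[OF assms]] is_eig_laplacian_0
    laplacian_eig_nonneg[OF assms]
  by (intro Min_eqI) auto

lemma eig_mult_laplacian_0:
  assumes "\<forall>i j. adj i j \<longleftrightarrow> adj j i" and "\<forall>i j. adj\<^sup>*\<^sup>* i j"
  shows "eig_mult (laplacian adj) 0 \<le> 1"
proof -
  have "{x. laplacian adj *v x = 0 *\<^sub>R x} \<subseteq> span {\<chi> i. 1}"
  proof
    fix x assume "x \<in> {x. laplacian adj *v x = 0 *\<^sub>R x}"
    then have "x $ i = x $ undefined" for i using laplacian_kernel_constant[OF assms] by simp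
    then have "x = x $ undefined *\<^sub>R (\<chi> i. 1)" by (simp add: vec_eq_iff)
    then show "x \<in> span {\<chi> i. 1}" by (metis span_base span_scale singletonI)
  qed
  then show ?thesis unfolding eig_mult_def using dim_le_card[of _ "{\<chi> i. 1}"] by simp
qed

lemma laplacian_has_pos_eig:
  fixes adj :: "'v::finite \<Rightarrow> 'v \<Rightarrow> bool"
  assumes sym: "\<forall>i j. adj i j \<longleftrightarrow> adj j i" and noloop: "\<forall>i. \<not> adj i i"
    and conn: "\<forall>i j. adj\<^sup>*\<^sup>* i j" and "CARD('v) \<ge> 2"
  shows "\<exists>\<mu>>0. is_eig (laplacian adj) \<mu>"
proof -
  have "\<not> (\<forall>a\<in>UNIV. \<forall>b\<in>UNIV. a = (b::'v))"
    using assms(4) by (subst card_le_Suc0_iff_eq[symmetric]) simp_all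
  then obtain a b :: 'v where "a \<noteq> b" by blast
  have "adj\<^sup>*\<^sup>* a b" using conn by simp
  then obtain k where "adj a k" using \<open>a \<noteq> b\<close> by (cases rule: converse_rtranclpE) auto
  then have deg: "0 < real (card {k. adj a k})" by (auto simp: card_gt_0_iff)
  obtain \<mu> where "is_eig (laplacian adj) \<mu>"
    and max: "\<And>x. norm x = 1 \<Longrightarrow> x \<bullet> (laplacian adj *v x) \<le> \<mu>"
    using symmetric_has_eig_ge_quadratic_form[OF transpose_laplacian[OF sym]] by blast
  have "real (card {k. adj a k}) \<le> \<mu>"
    using max[of "axis a 1"] unfolding laplacian_axis_form[of adj a, OF noloop] by simp
  with deg have "0 < \<mu>" by linarith
  with \<open>is_eig (laplacian adj) \<mu>\<close> show ?thesis by blast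
qed

lemma laplacian_second_eig_bounds:
  fixes adj :: "'v::finite \<Rightarrow> 'v \<Rightarrow> bool"
  assumes sym: "\<forall>i j. adj i j \<longleftrightarrow> adj j i" and "\<forall>i. \<not> adj i i"
    and conn: "\<forall>i j. adj\<^sup>*\<^sup>* i j" and "CARD('v) \<ge> 2"
  shows "0 < second_eig (laplacian adj) \<and> second_eig (laplacian adj) \<le> max_eig (laplacian adj)"
proof -
  define E where "E = {\<mu>. is_eig (laplacian adj) \<mu>}"
  have "finite E" unfolding E_def by (rule symmetric_eig_finite[OF transpose_laplacian[OF sym]])
  obtain \<mu> where "0 < \<mu>" "\<mu> \<in> E" using laplacian_has_pos_eig[OF assms] unfolding E_def by blast
  have second: "second_eig (laplacian adj) = Min (E - {0})"
    using min_eig_laplacian[OF sym] eig_mult_laplacian_0[OF sym conn]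
    unfolding second_eig_def E_def by simp
  have Min_in: "Min (E - {0}) \<in> E - {0}"
    using \<open>finite E\<close> \<open>\<mu> \<in> E\<close> \<open>0 < \<mu>\<close> by (intro Min_in) auto
  then have "0 \<le> Min (E - {0})" by (intro laplacian_eig_nonneg[OF sym]) (simp add: E_def)
  with Min_in have "0 < Min (E - {0})" by (simp add: less_le)
  moreover have "Min (E - {0}) \<le> max_eig (laplacian adj)"
    unfolding max_eig_def E_def[symmetric] using \<open>finite E\<close> Min_in by (intro Max_ge) auto
  ultimately show ?thesis unfolding second by simp
qed

lemma gamma_bounds:
  fixes adj :: "'v::finite \<Rightarrow> 'v \<Rightarrow> bool"
  assumes "\<forall>i j. adj i j \<longleftrightarrow> adj j i" and "\<forall>i. \<not> adj i i"
    and "\<forall>i j. adj\<^sup>*\<^sup>* i j" and "CARD('v) \<ge> 2"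
  shows "0 \<le> gamma adj \<and> gamma adj < 1"
proof -
  have "0 < second_eig (laplacian adj)" "second_eig (laplacian adj) \<le> max_eig (laplacian adj)"
    using laplacian_second_eig_bounds[OF assms] by auto
  then show ?thesis unfolding gamma_def by (simp add: divide_less_eq)
qed

lemma opnorm_mat: "opnorm (mat a :: real^'n^'n) = \<bar>a\<bar>"
proof -
  have "(\<lambda>x::real^'n. mat a *v x) = (\<lambda>x. a *\<^sub>R x)"
    by (simp add: fun_eq_iff vec_eq_iff matrix_vector_mult_def mat_def if_distrib[of "\<lambda>c. c * _"]
        cong: if_cong)
  then show ?thesis
    by (simp add: opnorm_def onorm_scaleR[OF bounded_linear_ident] onorm_id)
qed

lemma L_ok_imp_mult_power_less_1:
  assumes "0 < a" "0 \<le> \<gamma>" "\<gamma> < 1" "L_ok a \<gamma> L"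
  shows "a * \<gamma> ^ L < 1"
proof (cases "\<gamma> = 0")
  case True
  with assms(4) show ?thesis by (simp add: L_ok_def zero_power)
next
  case False
  with assms have "0 < \<gamma>" "0 < ln (1 / \<gamma>)" by auto
  with assms(4) False have "ln a < real L * ln (1 / \<gamma>)"
    by (simp add: L_ok_def pos_divide_less_eq)
  then have "ln (a * \<gamma> ^ L) < 0"
    using \<open>0 < a\<close> \<open>0 < \<gamma>\<close> by (simp add: ln_mult ln_realpow ln_div)
  then show ?thesis using \<open>0 < a\<close> \<open>0 < \<gamma>\<close> by (simp add: ln_less_zero_iff)
qed

lemma eventually_L_ok: "\<forall>\<^sub>F L in sequentially. L_ok a \<gamma> L"
proof -
  have "\<forall>\<^sub>F L in sequentially. X < real L" for X
    using filterlim_real_sequentially by (simp add: filterlim_at_top_dense)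
  then show ?thesis by (cases "\<gamma> = 0") (simp_all add: L_ok_def)
qed

lemma p0_nonneg:
  assumes "0 \<le> \<beta>" "0 \<le> \<gamma>" "a * \<gamma> ^ L < 1"
  shows "0 \<le> p0 N a \<beta> \<gamma> L"
  using assms by (simp add: p0_def)

lemma p0_tendsto_0:
  assumes "\<bar>\<gamma>\<bar> < 1"
  shows "(\<lambda>L. p0 N a \<beta> \<gamma> L) \<longlonglongrightarrow> 0"
proof -
  have "(\<lambda>L. \<gamma> ^ L) \<longlonglongrightarrow> 0" by (rule LIMSEQ_power_zero) (simp add: assms)
  then have "(\<lambda>L. sqrt (real N) * \<beta> * \<gamma> ^ L / (1 - a * \<gamma> ^ L))
      \<longlonglongrightarrow> sqrt (real N) * \<beta> * 0 / (1 - a * 0)"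
    by (intro tendsto_intros) (simp_all add: assms)
  then show ?thesis by (simp add: p0_def)
qed

lemma Ffun_ineq_fails:
  fixes N s :: nat and a \<beta> \<gamma> \<eta> bw bv lam :: real
  assumes "0 < N" "s \<le> N" "0 \<le> bw" "0 \<le> bv" "1 < a" "0 < \<beta>" "0 < \<eta>"
    and "0 \<le> p0 N a \<beta> \<gamma> L" and "lam \<le> real s"
  shows "\<eta> * (1 - Ffun N a \<beta> \<gamma> L bw bv lam \<eta>) < q0 N s a \<beta> \<gamma> L bw bv"
proof -
  define k where "k = kstar N a \<beta> \<gamma> L bw bv \<eta>"
  define D where "D = a * (p0 N a \<beta> \<gamma> L + \<eta>) + bw + bv"
  have "0 \<le> a * p0 N a \<beta> \<gamma> L" using assms by simp
  then have "a * \<eta> \<le> D" "0 < a * \<eta>" using assms by (auto simp: D_def distrib_left)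
  have k: "k = min 1 (\<beta> / D)" by (simp add: k_def kstar_def D_def)
  then have "0 \<le> k" using \<open>a * \<eta> \<le> D\<close> \<open>0 < a * \<eta>\<close> \<open>0 < \<beta>\<close> by simp
  have "k * (a * \<eta>) \<le> \<beta> / D * D"
    using k \<open>a * \<eta> \<le> D\<close> \<open>0 < a * \<eta>\<close> \<open>0 < \<beta>\<close> by (intro mult_mono) auto
  then have "k * (a * \<eta>) \<le> \<beta>" using \<open>a * \<eta> \<le> D\<close> \<open>0 < a * \<eta>\<close> by simp
  have "k * (a * \<eta>) * lam \<le> k * (a * \<eta>) * real s"
    using \<open>0 \<le> k\<close> \<open>0 < a * \<eta>\<close> assms(9) by (intro mult_left_mono) auto
  also have "\<dots> \<le> \<beta> * real s" using \<open>k * (a * \<eta>) \<le> \<beta>\<close> by (intro mult_right_mono) auto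
  finally have "k * (a * \<eta>) * lam / real N \<le> real s * \<beta> / real N"
    by (simp add: divide_right_mono mult.commute)
  moreover have "\<eta> * (1 - Ffun N a \<beta> \<gamma> L bw bv lam \<eta>) = \<eta> * (1 - a) + k * (a * \<eta>) * lam / real N"
    using assms(1) by (simp add: Ffun_def k_def field_simps)
  moreover have "0 \<le> (real N - real s) / real N * (bw + bv + a * p0 N a \<beta> \<gamma> L)"
    using assms \<open>0 \<le> a * p0 N a \<beta> \<gamma> L\<close> by simp
  moreover have "\<eta> * (1 - a) < 0" using assms by (simp add: mult_pos_neg)
  ultimately show ?thesis using assms(3) unfolding q0_def by linarith
qed

lemma lambda0_gt_if_Ffun_ineq_holds:
  fixes N s L :: nat and a \<beta> \<gamma> \<eta> bw bv lam :: real
  assumes "0 < N" "s \<le> N" "0 \<le> bw" "0 \<le> bv" "0 \<le> \<gamma>" "\<gamma> < 1"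
    and "1 < a" "0 < \<beta>" "0 < \<eta>" "L_ok a \<gamma> L"
    and "q0 N s a \<beta> \<gamma> L bw bv \<le> \<eta> * (1 - Ffun N a \<beta> \<gamma> L bw bv lam \<eta>)"
  shows "real s < lam"
proof (rule ccontr)
  have "0 \<le> p0 N a \<beta> \<gamma> L"
    using assms by (intro p0_nonneg L_ok_imp_mult_power_less_1) auto
  moreover assume "\<not> real s < lam"
  then have "lam \<le> real s" by simp
  ultimately have "\<eta> * (1 - Ffun N a \<beta> \<gamma> L bw bv lam \<eta>) < q0 N s a \<beta> \<gamma> L bw bv"
    by (rule Ffun_ineq_fails[OF assms(1-4,7-9)])
  with assms(11) show False by simp
qed

lemma Ffun_ineq_at_fixed_point:
  fixes N s L :: nat and a \<beta> \<gamma> \<eta> bw bv lam :: real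
  assumes "0 < N" and "0 < \<beta>" and fixed: "a * (p0 N a \<beta> \<gamma> L + \<eta>) + bw + bv = \<beta>"
  shows "q0 N s a \<beta> \<gamma> L bw bv \<le> \<eta> * (1 - Ffun N a \<beta> \<gamma> L bw bv lam \<eta>)
     \<longleftrightarrow> 2 * bw + bv + a * p0 N a \<beta> \<gamma> L \<le> (a * (lam - real s) / real N - (a - 1)) * \<eta>"
proof -
  have "kstar N a \<beta> \<gamma> L bw bv \<eta> = 1" using \<open>0 < \<beta>\<close> by (simp add: kstar_def fixed)
  then have lhs: "\<eta> * (1 - Ffun N a \<beta> \<gamma> L bw bv lam \<eta>)
      = (a * (lam - real s) / real N - (a - 1)) * \<eta> + a * \<eta> * real s / real N"
    using assms(1) by (simp add: Ffun_def field_simps)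
  have "q0 N s a \<beta> \<gamma> L bw bv
      = (real N - real s) / real N * (bw + bv + a * p0 N a \<beta> \<gamma> L) + bw + real s * \<beta> / real N"
    by (simp add: q0_def)
  also have "\<dots> = (real N - real s) / real N * (bw + bv + a * p0 N a \<beta> \<gamma> L) + bw
      + real s * (a * (p0 N a \<beta> \<gamma> L + \<eta>) + bw + bv) / real N"
    by (simp only: fixed)
  also have "\<dots> = (2 * bw + bv + a * p0 N a \<beta> \<gamma> L) + a * \<eta> * real s / real N"
    using assms(1) by (simp add: field_simps)
  finally show ?thesis unfolding lhs by simp
qed

lemma Ffun_ineq_solvable:
  fixes N s L :: nat and a \<gamma> bw bv lam :: real
  defines "c \<equiv> a * (lam - real s) / real N - (a - 1)" and "P \<equiv> a * p0 N a 1 \<gamma> L"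
  assumes "0 < N" "0 \<le> bw" "0 \<le> bv" "0 < a" "0 < c"
    and "0 \<le> P" "P \<le> 1 / 2" "4 * a * P \<le> c"
  shows "\<exists>\<beta>>0. \<exists>\<eta>>0. q0 N s a \<beta> \<gamma> L bw bv \<le> \<eta> * (1 - Ffun N a \<beta> \<gamma> L bw bv lam \<eta>)"
proof -
  define K where "K = bw + bv"
  define \<eta> where "\<eta> = 2 * (2 * K + bw) / c + 1"
  define \<beta> where "\<beta> = (a * \<eta> + K) / (1 - P)"
  have "0 \<le> K" using assms by (simp add: K_def)
  have "0 < \<eta>" using \<open>0 < c\<close> \<open>0 \<le> K\<close> assms by (simp add: \<eta>_def add_nonneg_pos)
  have "0 < \<beta>" using \<open>0 < \<eta>\<close> \<open>0 \<le> K\<close> assms by (simp add: \<beta>_def add_pos_nonneg)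
  have p0_\<beta>: "a * p0 N a \<beta> \<gamma> L = P * \<beta>" by (simp add: P_def p0_def)
  have "P * \<beta> + a * \<eta> + K = \<beta>" using assms by (simp add: \<beta>_def field_simps)
  then have fixed: "a * (p0 N a \<beta> \<gamma> L + \<eta>) + bw + bv = \<beta>"
    by (simp add: distrib_left p0_\<beta> K_def add.assoc)
  have "P * \<beta> = P * (a * \<eta> + K) / (1 - P)" by (simp add: \<beta>_def)
  also have "\<dots> \<le> P * (a * \<eta> + K) / (1 / 2)"
    using assms \<open>0 < \<eta>\<close> \<open>0 \<le> K\<close> by (intro divide_left_mono) auto
  also have "\<dots> = (2 * a * P) * \<eta> + (2 * P) * K" by (simp add: algebra_simps)
  also have "\<dots> \<le> c / 2 * \<eta> + 1 * K"
    using assms \<open>0 < \<eta>\<close> \<open>0 \<le> K\<close> by (intro add_mono mult_right_mono) auto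
  finally have "2 * (P * \<beta>) \<le> c * \<eta> + 2 * K" by (simp add: field_simps)
  moreover have "4 * K + 2 * bw \<le> c * \<eta>" using \<open>0 < c\<close> by (simp add: \<eta>_def field_simps)
  ultimately have "K + P * \<beta> + bw \<le> c * \<eta>" by linarith
  then have "2 * bw + bv + a * p0 N a \<beta> \<gamma> L \<le> c * \<eta>" using K_def p0_\<beta> by linarith
  then have "q0 N s a \<beta> \<gamma> L bw bv \<le> \<eta> * (1 - Ffun N a \<beta> \<gamma> L bw bv lam \<eta>)"
    using Ffun_ineq_at_fixed_point[OF \<open>0 < N\<close> \<open>0 < \<beta>\<close> fixed] unfolding c_def by simp
  then show ?thesis using \<open>0 < \<beta>\<close> \<open>0 < \<eta>\<close> by blast
qed

lemma Ffun_ineq_solvable_near_1: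
  fixes N s :: nat and a \<gamma> bw bv lam :: real
  assumes "0 < N" "0 \<le> bw" "0 \<le> bv" "0 \<le> \<gamma>" "\<gamma> < 1" "real s < lam"
    and "1 \<le> a" "a < 1 + (lam - real s) / real N"
  shows "\<exists>\<beta>>0. \<exists>\<eta>>0. \<exists>L. L_ok a \<gamma> L \<and>
           q0 N s a \<beta> \<gamma> L bw bv \<le> \<eta> * (1 - Ffun N a \<beta> \<gamma> L bw bv lam \<eta>)"
proof -
  define c where "c = a * (lam - real s) / real N - (a - 1)"
  have "(lam - real s) / real N \<le> a * ((lam - real s) / real N)"
    using assms mult_right_mono[of 1 a "(lam - real s) / real N"] by simp
  then have "0 < c" using assms(8) by (simp add: c_def)
  have "(\<lambda>L. a * p0 N a 1 \<gamma> L) \<longlonglongrightarrow> a * 0"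
    using assms by (intro tendsto_mult tendsto_const p0_tendsto_0) simp
  then have lim: "(\<lambda>L. a * p0 N a 1 \<gamma> L) \<longlonglongrightarrow> 0" by simp
  have "\<forall>\<^sub>F L in sequentially. a * p0 N a 1 \<gamma> L < 1 / 2"
    by (rule order_tendstoD(2)[OF lim]) simp
  moreover have "\<forall>\<^sub>F L in sequentially. a * p0 N a 1 \<gamma> L < c / (4 * a)"
    by (rule order_tendstoD(2)[OF lim]) (use \<open>0 < c\<close> assms(7) in simp)
  ultimately have "\<forall>\<^sub>F L in sequentially. L_ok a \<gamma> L \<and>
      a * p0 N a 1 \<gamma> L < 1 / 2 \<and> a * p0 N a 1 \<gamma> L < c / (4 * a)"
    using eventually_L_ok by (intro eventually_conj)
  then obtain L where "L_ok a \<gamma> L" and small: "a * p0 N a 1 \<gamma> L < 1 / 2" "a * p0 N a 1 \<gamma> L < c / (4 * a)"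
    using eventually_happens'[OF sequentially_bot] by blast
  have "0 \<le> a * p0 N a 1 \<gamma> L"
    using assms L_ok_imp_mult_power_less_1[OF _ _ _ \<open>L_ok a \<gamma> L\<close>] by (simp add: p0_nonneg)
  moreover have "4 * a * (a * p0 N a 1 \<gamma> L) \<le> c"
    using small(2) assms(7) by (simp add: field_simps)
  ultimately have "\<exists>\<beta>>0. \<exists>\<eta>>0. q0 N s a \<beta> \<gamma> L bw bv \<le> \<eta> * (1 - Ffun N a \<beta> \<gamma> L bw bv lam \<eta>)"
    using Ffun_ineq_solvable[OF assms(1-3) _ \<open>0 < c\<close>[unfolded c_def]] small(1) assms(7)
    unfolding c_def by simp
  then show ?thesis using \<open>L_ok a \<gamma> L\<close> by blast
qed

theorem theorem2:
  fixes adj :: "'v::finite \<Rightarrow> 'v \<Rightarrow> bool"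
    and C :: "'v \<Rightarrow> real^'n"
    and s :: nat and bw bv :: real
  assumes sym: "\<forall>i j. adj i j \<longleftrightarrow> adj j i"
    and noloop: "\<forall>i. \<not> adj i i"
    and conn: "\<forall>i j. adj\<^sup>*\<^sup>* i j"
    and N2: "CARD('v) \<ge> 2"
    and Cnorm: "\<forall>i. norm (C i) = 1"
    and sN: "s \<le> CARD('v)"
    and bw: "bw \<ge> 0" and bv: "bv \<ge> 0"
  shows "(\<exists>\<epsilon>>0. \<forall>A :: real^'n^'n. 1 \<le> opnorm A \<and> opnorm A < 1 + \<epsilon> \<longrightarrow>
            (\<exists>\<beta>>0. \<exists>\<eta>0>0. \<exists>L::nat. L_ok (opnorm A) (gamma adj) L \<and>
               \<eta>0 * (1 - Ffun CARD('v) (opnorm A) \<beta> (gamma adj) L bw bv (lambda0 C s) \<eta>0)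
                 \<ge> q0 CARD('v) s (opnorm A) \<beta> (gamma adj) L bw bv))
         \<longleftrightarrow> lambda0 C s > real s"
proof -
  have N: "0 < CARD('v)" by simp
  have \<gamma>: "0 \<le> gamma adj" "gamma adj < 1" using gamma_bounds[OF sym noloop conn N2] by auto
  show ?thesis (is "(\<exists>\<epsilon>>0. \<forall>A. ?near A \<epsilon> \<longrightarrow> ?solvable A) \<longleftrightarrow> _")
  proof
    assume "\<exists>\<epsilon>>0. \<forall>A. ?near A \<epsilon> \<longrightarrow> ?solvable A"
    then obtain \<epsilon> where "0 < \<epsilon>" and solvable: "\<And>A. ?near A \<epsilon> \<Longrightarrow> ?solvable A" by blast
    define a where "a = 1 + \<epsilon> / 2"
    have "1 < a" using \<open>0 < \<epsilon>\<close> by (simp add: a_def)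
    have "a < 1 + \<epsilon>" using \<open>0 < \<epsilon>\<close> by (simp add: a_def)
    have norm_a: "opnorm (mat a :: real^'n^'n) = a" using \<open>1 < a\<close> by (simp add: opnorm_mat)
    have "?solvable (mat a)"
      using solvable[of "mat a"] \<open>1 < a\<close> \<open>a < 1 + \<epsilon>\<close> unfolding norm_a by simp
    then obtain \<beta> \<eta> L where "0 < \<beta>" "0 < \<eta>" "L_ok a (gamma adj) L"
      and "q0 CARD('v) s a \<beta> (gamma adj) L bw bv
             \<le> \<eta> * (1 - Ffun CARD('v) a \<beta> (gamma adj) L bw bv (lambda0 C s) \<eta>)"
      unfolding norm_a by blast
    then show "real s < lambda0 C s"
      by (rule lambda0_gt_if_Ffun_ineq_holds[OF N sN bw bv \<gamma> \<open>1 < a\<close>])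
  next
    assume lam: "real s < lambda0 C s"
    then have "0 < (lambda0 C s - real s) / CARD('v)" by simp
    moreover have "?solvable A" if "?near A ((lambda0 C s - real s) / CARD('v))" for A
      using Ffun_ineq_solvable_near_1[OF N bw bv \<gamma> lam] that by blast
    ultimately show "\<exists>\<epsilon>>0. \<forall>A. ?near A \<epsilon> \<longrightarrow> ?solvable A" by blast
  qed
qed

end
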